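(* Let $\alpha\in[0,\pi/2)$ and let $P,C$ be causal stable systems on $\mathcal{L}_{2e+}^n$ with $\theta(P)\le\alpha$ and $\theta(C)\le\alpha$, such that the feedback system $P\#C$ is well-posed. Let $G:e_1\mapsto y_1$ be the closed-loop map of $P\#C|_{e_2=0}$. Then $G$ is stable and $\theta(G)\le\alpha$.
   Context: For $n\ge1$, $\mathcal{L}_2^n$ is the set of measurable $u:\mathbb{R}\to\mathbb{R}^n$ with $\|u\|_2^2=\int|u(t)|^2dt<\infty$, inner product $\langle u,v\rangle=\int u(t)^Tv(t)\,dt$; $\mathcal{L}_{2+}=\{u\in\mathcal{L}_2:u(t)=0\ \text{for}\ t<0\}$. For $T\ge0$, $(\Gamma_Tu)(t)=u(t)$ for $t\le T$, $0$ for $t>T$; $\mathcal{L}_{2e+}=\{u:\Gamma_Tu\in\mathcal{L}_{2+}\ \forall T\ge0\}$. A system is an operator $P:\mathcal{L}_{2e+}\to\mathcal{L}_{2e+}$ with $P0=0$, $P\ne0$; causal if $\Gamma_TP=\Gamma_TP\Gamma_T$ for all $T\ge 0$; a causal system is stable if $Pu\in\mathcal{L}_{2+}$ for all $u\in\mathcal{L}_{2+}$ and $\sup_{0\ne u\in\mathcal{L}_{2+}}\|Pu\|_2/\|u\|_2<\infty$. The singular angle $\theta(P)\in[0,\pi]$ is given by $\cos\theta(P)=\inf\{\langle u,Pu\rangle/(\|u\|_2\|Pu\|_2):0\neq u\in\mathcal{L}_{2+},\ Pu\ne0\}$. The feedback system $P\#C$: $u_1=e_1-y_2$, $u_2=e_2+y_1$,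 $y_1=Pu_1$, $y_2=Cu_2$; it is well-posed if $(u_1,u_2)\mapsto(u_1+Cu_2,\ u_2-Pu_1)$ has a causal inverse on $\mathcal{L}_{2e+}\times\mathcal{L}_{2e+}$. $P\#C|_{e_2=0}$ denotes the loop with $e_2=0$. *)

theory Defs
  imports "HOL-Analysis.Analysis"
begin

type_synonym 'n signal = "real \<Rightarrow> real ^ 'n"
type_synonym 'n system = "'n signal \<Rightarrow> 'n signal"

definition L2 :: "'n::finite signal set" where
  "L2 = {u. u \<in> borel_measurable lborel \<and> integrable lborel (\<lambda>t. (norm (u t))\<^sup>2)}"

definition inner_L2 :: "'n::finite signal \<Rightarrow> 'n signal \<Rightarrow> real" where
  "inner_L2 u v = (\<integral>t. u t \<bullet> v t \<partial>lborel)"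

definition norm_L2 :: "'n::finite signal \<Rightarrow> real" where
  "norm_L2 u = sqrt (\<integral>t. (norm (u t))\<^sup>2 \<partial>lborel)"

definition L2p :: "'n::finite signal set" where
  "L2p = {u. u \<in> L2 \<and> (\<forall>t<0. u t = 0)}"

definition trunc :: "real \<Rightarrow> 'n::finite signal \<Rightarrow> 'n signal" where
  "trunc T u = (\<lambda>t. if t \<le> T then u t else 0)"

definition L2ep :: "'n::finite signal set" where
  "L2ep = {u. \<forall>T\<ge>0. trunc T u \<in> L2p}"

definition is_system :: "'n::finite system \<Rightarrow> bool" where
  "is_system P \<longleftrightarrow> (\<forall>u\<in>L2ep. P u \<in> L2ep) \<and> P (\<lambda>t. 0) = (\<lambda>t. 0) \<and> (\<exists>u\<in>L2ep. P u \<noteq> (\<lambda>t. 0))"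

definition causal :: "'n::finite system \<Rightarrow> bool" where
  "causal P \<longleftrightarrow> (\<forall>T\<ge>0. \<forall>u\<in>L2ep. trunc T (P u) = trunc T (P (trunc T u)))"

definition stable :: "'n::finite system \<Rightarrow> bool" where
  "stable P \<longleftrightarrow> causal P \<and> (\<forall>u\<in>L2p. P u \<in> L2p) \<and>
     (\<exists>K. \<forall>u\<in>L2p. norm_L2 u \<noteq> 0 \<longrightarrow> norm_L2 (P u) / norm_L2 u \<le> K)"

definition singular_angle :: "'n::finite system \<Rightarrow> real" where
  "singular_angle P = arccos (Inf {inner_L2 u (P u) / (norm_L2 u * norm_L2 (P u)) | u.
       u \<in> L2p \<and> norm_L2 u \<noteq> 0 \<and> norm_L2 (P u) \<noteq> 0})"

definition fb_map :: "'n::finite system \<Rightarrow> 'n system \<Rightarrow> 'n signal \<times> 'n signal \<Rightarrow> 'n signal \<times> 'n signal" where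
  "fb_map P C = (\<lambda>(u1, u2). (\<lambda>t. u1 t + C u2 t, \<lambda>t. u2 t - P u1 t))"

definition causal_inverse_fb ::
  "'n::finite system \<Rightarrow> 'n system \<Rightarrow> ('n signal \<times> 'n signal \<Rightarrow> 'n signal \<times> 'n signal) \<Rightarrow> bool" where
  "causal_inverse_fb P C F' \<longleftrightarrow>
     (\<forall>e1\<in>L2ep. \<forall>e2\<in>L2ep. fst (F' (e1, e2)) \<in> L2ep \<and> snd (F' (e1, e2)) \<in> L2ep \<and>
          fb_map P C (F' (e1, e2)) = (e1, e2)) \<and>
     (\<forall>u1\<in>L2ep. \<forall>u2\<in>L2ep. F' (fb_map P C (u1, u2)) = (u1, u2)) \<and>
     (\<forall>T\<ge>0. \<forall>e1\<in>L2ep. \<forall>e2\<in>L2ep.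
          trunc T (fst (F' (e1, e2))) = trunc T (fst (F' (trunc T e1, trunc T e2))) \<and>
          trunc T (snd (F' (e1, e2))) = trunc T (snd (F' (trunc T e1, trunc T e2))))"

definition well_posed :: "'n::finite system \<Rightarrow> 'n system \<Rightarrow> bool" where
  "well_posed P C \<longleftrightarrow> (\<exists>F'. causal_inverse_fb P C F')"

text \<open>Closed-loop map e1 |-> y1 of P#C with e2 = 0, using the (unique on L2e+) causal inverse.\<close>
definition closed_loop_e1_y1 :: "'n::finite system \<Rightarrow> 'n system \<Rightarrow> 'n system" where
  "closed_loop_e1_y1 P C = (\<lambda>e1. P (fst ((SOME F'. causal_inverse_fb P C F') (e1, \<lambda>t. 0))))"

end

theory Submission
  imports Defs
begin

text \<open>Write \<open>c = cos \<alpha> > 0\<close>. For an input \<open>e = u + C (P u)\<close> of the loop with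
  output \<open>y = P u\<close>, the angle bounds on \<open>P\<close> (at \<open>u\<close>) and on \<open>C\<close> (at \<open>y\<close>) give
  \<open>\<langle>e, y\<rangle> = \<langle>u, P u\<rangle> + \<langle>y, C y\<rangle> \<ge> c \<parallel>y\<parallel> (\<parallel>u\<parallel> + \<parallel>C y\<parallel>) \<ge> c \<parallel>y\<parallel> \<parallel>e\<parallel>\<close>,
  so the closed loop inherits the angle bound. Together with Cauchy-Schwarz the first inequality
  gives \<open>c \<parallel>u\<parallel> \<le> \<parallel>e\<parallel>\<close>, hence \<open>\<parallel>y\<parallel> \<le> (K\<^sub>P / c) \<parallel>e\<parallel>\<close> for a gain \<open>K\<^sub>P\<close> of \<open>P\<close>.
  Since a priori \<open>u\<close> is only an extended signal, this gain bound is proved for all truncations,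
  using causality, and then yields stability.\<close>

lemma L2_measurable: "u \<in> L2 \<Longrightarrow> u \<in> borel_measurable borel"
  by (simp add: L2_def)

lemma L2_dominated:
  assumes meas: "u \<in> borel_measurable lborel" and g: "integrable lborel g"
    and le: "\<And>t. (norm (u t))\<^sup>2 \<le> g t"
  shows "u \<in> L2"
proof -
  have [measurable]: "u \<in> borel_measurable borel"
    using meas by simp
  have "integrable lborel (\<lambda>t. (norm (u t))\<^sup>2)"
  proof (rule Bochner_Integration.integrable_bound[OF g])
    show "(\<lambda>t. (norm (u t))\<^sup>2) \<in> borel_measurable lborel"
      by measurable
    show "AE t in lborel. norm ((norm (u t))\<^sup>2) \<le> norm (g t)"
      using le order_trans[OF zero_le_power2 le] by simp
  qed
  then show ?thesis
    using meas by (simp add: L2_def)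
qed

lemma L2_add:
  assumes "u \<in> L2" "v \<in> L2"
  shows "(\<lambda>t. u t + v t) \<in> L2"
proof (rule L2_dominated)
  note [measurable] = assms[THEN L2_measurable]
  show "(\<lambda>t. u t + v t) \<in> borel_measurable lborel"
    by measurable
  show "integrable lborel (\<lambda>t. 2 * (norm (u t))\<^sup>2 + 2 * (norm (v t))\<^sup>2)"
    using assms by (simp add: L2_def)
  fix t
  have "(norm (u t + v t))\<^sup>2 \<le> (norm (u t) + norm (v t))\<^sup>2"
    by (simp add: norm_triangle_ineq power_mono)
  also have "\<dots> \<le> 2 * (norm (u t))\<^sup>2 + 2 * (norm (v t))\<^sup>2"
    using sum_squares_bound[of "norm (u t)" "norm (v t)"] by (simp add: power2_sum)
  finally show "(norm (u t + v t))\<^sup>2 \<le> 2 * (norm (u t))\<^sup>2 + 2 * (norm (v t))\<^sup>2" .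
qed

lemma L2_diff:
  assumes "u \<in> L2" "v \<in> L2"
  shows "(\<lambda>t. u t - v t) \<in> L2"
proof -
  have "(\<lambda>t. - v t) \<in> L2"
    using assms(2) by (simp add: L2_def)
  from L2_add[OF assms(1) this] show ?thesis by simp
qed

lemma L2_trunc:
  assumes "u \<in> L2"
  shows "trunc T u \<in> L2"
proof (rule L2_dominated)
  note [measurable] = assms[THEN L2_measurable]
  show "trunc T u \<in> borel_measurable lborel"
    unfolding trunc_def by measurable
  show "integrable lborel (\<lambda>t. (norm (u t))\<^sup>2)"
    using assms by (simp add: L2_def)
qed (simp add: trunc_def)

lemma integrable_norm_mult_L2:
  assumes "u \<in> L2" "v \<in> L2"
  shows "integrable lborel (\<lambda>t. norm (u t) * norm (v t))"
proof (rule Bochner_Integration.integrable_bound)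
  show "integrable lborel (\<lambda>t. (norm (u t))\<^sup>2 + (norm (v t))\<^sup>2)"
    using assms by (simp add: L2_def)
  note [measurable] = assms[THEN L2_measurable]
  show "(\<lambda>t. norm (u t) * norm (v t)) \<in> borel_measurable lborel"
    by measurable
  have "norm (u t) * norm (v t) \<le> (norm (u t))\<^sup>2 + (norm (v t))\<^sup>2" for t
    using sum_squares_bound[of "norm (u t)" "norm (v t)"]
      mult_nonneg_nonneg[OF norm_ge_zero norm_ge_zero, of "u t" "v t"] by linarith
  then show "AE t in lborel. norm (norm (u t) * norm (v t)) \<le> norm ((norm (u t))\<^sup>2 + (norm (v t))\<^sup>2)"
    by simp
qed

lemma integrable_inner_L2:
  assumes "u \<in> L2" "v \<in> L2"
  shows "integrable lborel (\<lambda>t. u t \<bullet> v t)"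
proof (rule Bochner_Integration.integrable_bound[OF integrable_norm_mult_L2[OF assms]])
  note [measurable] = assms[THEN L2_measurable]
  show "(\<lambda>t. u t \<bullet> v t) \<in> borel_measurable lborel"
    by measurable
  show "AE t in lborel. norm (u t \<bullet> v t) \<le> norm (norm (u t) * norm (v t))"
    by (simp add: Cauchy_Schwarz_ineq2)
qed

lemma norm_L2_nonneg: "0 \<le> norm_L2 u"
  by (simp add: norm_L2_def)

lemma abs_inner_L2_le:
  assumes "u \<in> L2" "v \<in> L2"
  shows "\<bar>inner_L2 u v\<bar> \<le> norm_L2 u * norm_L2 v"
proof -
  define I where "I = (\<integral>t. norm (u t) * norm (v t) \<partial>lborel)"
  have I_nonneg: "0 \<le> I"
    unfolding I_def by simp
  have "\<bar>inner_L2 u v\<bar> \<le> (\<integral>t. \<bar>u t \<bullet> v t\<bar> \<partial>lborel)"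
    unfolding inner_L2_def by (rule integral_abs_bound)
  also have "\<dots> \<le> I"
    unfolding I_def using assms
    by (intro integral_mono integrable_norm_mult_L2)
       (auto simp: integrable_inner_L2 Cauchy_Schwarz_ineq2)
  also have "I \<le> norm_L2 u * norm_L2 v"
  proof -
    have sq: "(\<integral>\<^sup>+t. ennreal (norm (w t)) ^ 2 \<partial>lborel) = ennreal ((norm_L2 w)\<^sup>2)"
      if "w \<in> L2" for w :: "'n::finite signal"
      using that by (simp add: ennreal_power norm_L2_def L2_def nn_integral_eq_integral)
    have meas: "(\<lambda>t. ennreal (norm (w t))) \<in> borel_measurable lborel"
      if "w \<in> L2" for w :: "'n::finite signal"
      using L2_measurable[OF that]
      by (auto intro: measurable_compose[OF _ measurable_ennreal]
          measurable_compose[OF _ borel_measurable_norm])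
    have "ennreal (I\<^sup>2) = (\<integral>\<^sup>+t. ennreal (norm (u t)) * ennreal (norm (v t)) \<partial>lborel)\<^sup>2"
      using assms I_nonneg unfolding I_def
      by (simp add: ennreal_power ennreal_mult[symmetric] nn_integral_eq_integral
          integrable_norm_mult_L2)
    also have "\<dots> \<le> (\<integral>\<^sup>+t. ennreal (norm (u t)) ^ 2 \<partial>lborel) *
        (\<integral>\<^sup>+t. ennreal (norm (v t)) ^ 2 \<partial>lborel)"
      by (rule Cauchy_Schwarz_nn_integral[OF meas meas]) (fact assms)+
    also have "\<dots> = ennreal ((norm_L2 u * norm_L2 v)\<^sup>2)"
      using assms by (simp add: sq ennreal_mult power_mult_distrib)
    finally have "I\<^sup>2 \<le> (norm_L2 u * norm_L2 v)\<^sup>2"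
      by (rule ennreal_le_iff[THEN iffD1, rotated]) simp
    then show ?thesis
      by (rule power2_le_imp_le) (simp add: norm_L2_nonneg)
  qed
  finally show ?thesis .
qed

lemma inner_L2_commute: "inner_L2 u v = inner_L2 v u"
  by (simp add: inner_L2_def inner_commute)

lemma inner_L2_add_left:
  assumes "u \<in> L2" "v \<in> L2" "w \<in> L2"
  shows "inner_L2 (\<lambda>t. u t + v t) w = inner_L2 u w + inner_L2 v w"
  by (simp add: inner_L2_def inner_add_left integrable_inner_L2 assms)

lemma power2_norm_L2: "(norm_L2 u)\<^sup>2 = inner_L2 u u"
  by (simp add: norm_L2_def inner_L2_def power2_norm_eq_inner)

lemma power2_norm_L2_add:
  assumes "u \<in> L2" "v \<in> L2"
  shows "(norm_L2 (\<lambda>t. u t + v t))\<^sup>2 = (norm_L2 u)\<^sup>2 + 2 * inner_L2 u v + (norm_L2 v)\<^sup>2"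
proof -
  have inner_sum_right: "inner_L2 w (\<lambda>t. u t + v t) = inner_L2 u w + inner_L2 v w"
    if "w \<in> L2" for w
    using inner_L2_add_left[OF assms that] inner_L2_commute by metis
  show ?thesis
    using inner_L2_add_left[OF assms L2_add[OF assms]] inner_sum_right[OF assms(1)]
      inner_sum_right[OF assms(2)] inner_L2_commute[of v u]
    by (simp add: power2_norm_L2)
qed

lemma norm_L2_triangle:
  assumes "u \<in> L2" "v \<in> L2"
  shows "norm_L2 (\<lambda>t. u t + v t) \<le> norm_L2 u + norm_L2 v"
proof (rule power2_le_imp_le)
  show "(norm_L2 (\<lambda>t. u t + v t))\<^sup>2 \<le> (norm_L2 u + norm_L2 v)\<^sup>2"
    using power2_norm_L2_add[OF assms] abs_inner_L2_le[OF assms] by (simp add: power2_sum)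
qed (simp add: norm_L2_nonneg add_nonneg_nonneg)

lemma inner_L2_trunc: "inner_L2 (trunc T u) v = inner_L2 (trunc T u) (trunc T v)"
  unfolding inner_L2_def by (rule arg_cong[where f = "integral\<^sup>L lborel"]) (auto simp: trunc_def)

lemma norm_L2_trunc_le:
  assumes "u \<in> L2"
  shows "norm_L2 (trunc T u) \<le> norm_L2 u"
  unfolding norm_L2_def using assms L2_trunc[OF assms]
  by (intro real_sqrt_le_mono integral_mono) (auto simp: L2_def trunc_def)

lemma L2p_imp_L2: "u \<in> L2p \<Longrightarrow> u \<in> L2"
  by (simp add: L2p_def)

lemma L2p_add: "u \<in> L2p \<Longrightarrow> v \<in> L2p \<Longrightarrow> (\<lambda>t. u t + v t) \<in> L2p"
  by (simp add: L2p_def L2_add)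

lemma L2p_diff: "u \<in> L2p \<Longrightarrow> v \<in> L2p \<Longrightarrow> (\<lambda>t. u t - v t) \<in> L2p"
  by (simp add: L2p_def L2_diff)

lemma L2p_trunc: "u \<in> L2p \<Longrightarrow> trunc T u \<in> L2p"
  by (simp add: L2p_def L2_trunc) (simp add: trunc_def)

lemma L2p_imp_L2ep: "u \<in> L2p \<Longrightarrow> u \<in> L2ep"
  by (simp add: L2ep_def L2p_trunc)

lemma L2ep_trunc: "u \<in> L2ep \<Longrightarrow> 0 \<le> T \<Longrightarrow> trunc T u \<in> L2p"
  by (simp add: L2ep_def)

lemma zero_L2ep: "(\<lambda>t. 0) \<in> L2ep"
  by (simp add: L2ep_def L2p_def L2_def trunc_def)

lemma L2ep_measurable:
  assumes "u \<in> L2ep"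
  shows "u \<in> borel_measurable lborel"
proof (rule borel_measurable_LIMSEQ_metric)
  show "trunc (real n) u \<in> borel_measurable lborel" for n
    using L2ep_trunc[OF assms] by (simp add: L2p_def L2_def)
  show "(\<lambda>n. trunc (real n) u t) \<longlonglongrightarrow> u t" for t
  proof (rule tendsto_eventually)
    obtain N :: nat where "t \<le> real N" using real_arch_simple by blast
    then show "\<forall>\<^sub>F n in sequentially. trunc (real n) u t = u t"
      by (auto simp: eventually_sequentially trunc_def intro!: exI[of _ N])
  qed
qed

lemma L2ep_bounded_imp_L2p:
  assumes u: "u \<in> L2ep" and bound: "\<And>T. 0 \<le> T \<Longrightarrow> norm_L2 (trunc T u) \<le> B"
  shows "u \<in> L2p" "norm_L2 u \<le> B"
proof -
  define f where "f n = (\<lambda>t. (norm (trunc (real n) u t))\<^sup>2)" for n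
  have int_f: "integrable lborel (f n)" for n
    using L2ep_trunc[OF u, of "real n"] unfolding f_def L2p_def L2_def by simp
  have int_f_le: "integral\<^sup>L lborel (f n) \<le> B\<^sup>2" for n
    using bound[of "real n"] by (intro sqrt_le_D) (simp add: norm_L2_def f_def)
  define x where "x = (SUP n. integral\<^sup>L lborel (f n))"
  have "incseq (\<lambda>n. integral\<^sup>L lborel (f n))"
    by (intro monoI integral_mono int_f) (auto simp: f_def trunc_def)
  then have lim: "(\<lambda>n. integral\<^sup>L lborel (f n)) \<longlonglongrightarrow> x"
    unfolding x_def using int_f_le by (intro LIMSEQ_incseq_SUP bdd_aboveI2) auto
  have mono_f: "AE t in lborel. mono (\<lambda>n. f n t)"
    by (auto simp: mono_def f_def trunc_def)
  have lim_f: "AE t in lborel. (\<lambda>n. f n t) \<longlonglongrightarrow> (norm (u t))\<^sup>2"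
  proof (rule AE_I2, rule tendsto_eventually)
    fix t
    obtain N :: nat where "t \<le> real N" using real_arch_simple by blast
    then show "\<forall>\<^sub>F n in sequentially. f n t = (norm (u t))\<^sup>2"
      by (auto simp: eventually_sequentially f_def trunc_def intro!: exI[of _ N])
  qed
  have meas: "(\<lambda>t. (norm (u t))\<^sup>2) \<in> borel_measurable lborel"
    using L2ep_measurable[OF u] by measurable
  have "integrable lborel (\<lambda>t. (norm (u t))\<^sup>2)"
    by (rule integrable_monotone_convergence[OF int_f mono_f lim_f lim meas])
  moreover have "(\<integral>t. (norm (u t))\<^sup>2 \<partial>lborel) \<le> B\<^sup>2"
    using integral_monotone_convergence[OF int_f mono_f lim_f lim meas] int_f_le
    unfolding x_def by (simp add: cSUP_least)
  moreover have "0 \<le> B"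
    using bound[of 0] norm_L2_nonneg[of "trunc 0 u"] by linarith
  moreover have "u t = 0" if "t < 0" for t
    using L2ep_trunc[OF u, of 0] that by (auto simp: L2p_def trunc_def)
  ultimately show "u \<in> L2p" "norm_L2 u \<le> B"
    using L2ep_measurable[OF u] by (auto simp: L2p_def L2_def norm_L2_def intro: real_le_lsqrt)
qed

lemma causalD: "causal S \<Longrightarrow> u \<in> L2ep \<Longrightarrow> 0 \<le> T \<Longrightarrow> trunc T (S u) = trunc T (S (trunc T u))"
  by (simp add: causal_def)

lemma stable_causal: "stable S \<Longrightarrow> causal S"
  by (simp add: stable_def)

lemma stable_L2p: "stable S \<Longrightarrow> u \<in> L2p \<Longrightarrow> S u \<in> L2p"
  by (simp add: stable_def)

lemma indicator_bump_L2p: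
  fixes e :: "real ^ 'n::finite"
  assumes "0 \<le> T" "0 < h" "norm e = 1"
  shows "(\<lambda>t. indicator {T<..T+h} t *\<^sub>R e) \<in> L2p"
    and "norm_L2 (\<lambda>t. indicator {T<..T+h} t *\<^sub>R e) = sqrt h"
proof -
  have norm_sq: "(\<lambda>t. (norm (indicator {T<..T+h} t *\<^sub>R e))\<^sup>2) = indicator {T<..T+h}"
    using assms(3) by (auto simp: indicator_def)
  show "norm_L2 (\<lambda>t. indicator {T<..T+h} t *\<^sub>R e) = sqrt h"
    unfolding norm_L2_def norm_sq using assms(2) by simp
  have "integrable lborel (\<lambda>t. (norm (indicator {T<..T+h} t *\<^sub>R e))\<^sup>2)"
    unfolding norm_sq using assms(2)
    by (intro integrable_real_indicator) (auto simp: emeasure_lborel_Ioc)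
  moreover have "(\<lambda>t. indicator {T<..T+h} t *\<^sub>R e) \<in> borel_measurable lborel"
    by measurable
  moreover have "\<forall>t<0. indicator {T<..T+h} t *\<^sub>R e = 0"
    using assms(1) by (simp add: indicator_def)
  ultimately show "(\<lambda>t. indicator {T<..T+h} t *\<^sub>R e) \<in> L2p"
    unfolding L2p_def L2_def by blast
qed

text \<open>The gain bound in the definition of stability only constrains inputs of nonzero norm.
  An input \<open>v\<close> of zero norm is perturbed by a bump of norm \<open>sqrt h\<close> supported after \<open>T\<close>:
  by causality the output up to time \<open>T\<close> is unchanged, so its norm is at most \<open>K sqrt h\<close>
  for every \<open>h > 0\<close>.\<close>
lemma stable_trunc_null_input:
  fixes S :: "'n::finite system"
  assumes S: "stable S" and v: "v \<in> L2p" "norm_L2 v = 0" and T: "0 \<le> T"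
  shows "norm_L2 (trunc T (S v)) = 0"
proof -
  obtain K where K: "\<And>u. u \<in> L2p \<Longrightarrow> norm_L2 u \<noteq> 0 \<Longrightarrow> norm_L2 (S u) / norm_L2 u \<le> K"
    using S unfolding stable_def by blast
  define e :: "real ^ 'n" where "e = axis undefined 1"
  have bound: "norm_L2 (trunc T (S v)) \<le> K * sqrt h" if h: "0 < h" for h
  proof -
    define z where "z = (\<lambda>t. indicator {T<..T+h} t *\<^sub>R e)"
    have z: "z \<in> L2p" "norm_L2 z = sqrt h"
      using indicator_bump_L2p[OF T h, of e] by (simp_all add: z_def e_def)
    define w where "w = (\<lambda>t. v t + z t)"
    have w: "w \<in> L2p" unfolding w_def using v(1) z(1) by (rule L2p_add)
    have "inner_L2 v z = 0"
      using abs_inner_L2_le[OF L2p_imp_L2 L2p_imp_L2, OF v(1) z(1)] v(2) by simp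
    then have "(norm_L2 w)\<^sup>2 = h"
      using power2_norm_L2_add[OF L2p_imp_L2 L2p_imp_L2, OF v(1) z(1)] v(2) z(2) h
      by (simp add: w_def)
    then have norm_w: "norm_L2 w = sqrt h"
      using real_sqrt_unique[OF _ norm_L2_nonneg] by metis
    have "trunc T w = trunc T v"
      by (auto simp: trunc_def w_def z_def)
    then have "trunc T (S v) = trunc T (S w)"
      using causalD[OF stable_causal[OF S]] L2p_imp_L2ep v(1) w T by metis
    then have "norm_L2 (trunc T (S v)) \<le> norm_L2 (S w)"
      using norm_L2_trunc_le[OF L2p_imp_L2[OF stable_L2p[OF S w]]] by simp
    also have "\<dots> \<le> K * sqrt h"
      using K[OF w] norm_w h by (simp add: divide_le_eq)
    finally show ?thesis .
  qed
  have "((\<lambda>h. K * sqrt h) \<longlongrightarrow> K * sqrt 0) (at_right 0)"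
    by (intro tendsto_intros)
  then have "norm_L2 (trunc T (S v)) \<le> K * sqrt 0"
    by (rule tendsto_lowerbound) (auto intro: eventually_mono[OF eventually_at_right_less bound])
  then show ?thesis
    using norm_L2_nonneg[of "trunc T (S v)"] by simp
qed

lemma stable_trunc_gain:
  assumes S: "stable S"
  obtains K where "0 \<le> K"
    and "\<And>u T. u \<in> L2ep \<Longrightarrow> 0 \<le> T \<Longrightarrow> norm_L2 (trunc T (S u)) \<le> K * norm_L2 (trunc T u)"
proof -
  obtain K0 where K0: "\<And>u. u \<in> L2p \<Longrightarrow> norm_L2 u \<noteq> 0 \<Longrightarrow> norm_L2 (S u) / norm_L2 u \<le> K0"
    using S unfolding stable_def by blast
  define K where "K = max K0 0"
  have "norm_L2 (trunc T (S u)) \<le> K * norm_L2 (trunc T u)" if u: "u \<in> L2ep" and T: "0 \<le> T" for u T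
  proof -
    define v where "v = trunc T u"
    have v: "v \<in> L2p" using L2ep_trunc[OF u T] by (simp add: v_def)
    have eq: "trunc T (S u) = trunc T (S v)"
      using causalD[OF stable_causal[OF S] u T] by (simp add: v_def)
    show ?thesis
    proof (cases "norm_L2 v = 0")
      case True
      then show ?thesis
        using stable_trunc_null_input[OF S v True T] eq by (simp add: v_def)
    next
      case False
      have "norm_L2 (trunc T (S v)) \<le> norm_L2 (S v)"
        using norm_L2_trunc_le[OF L2p_imp_L2[OF stable_L2p[OF S v]]] .
      also have "\<dots> \<le> K0 * norm_L2 v"
        using K0[OF v False] False norm_L2_nonneg[of v] by (simp add: divide_le_eq)
      also have "\<dots> \<le> K * norm_L2 v"
        using norm_L2_nonneg[of v] by (simp add: K_def mult_right_mono)
      finally show ?thesis using eq by (simp add: v_def)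
    qed
  qed
  then show ?thesis using that[of K] by (simp add: K_def)
qed

lemma stable_if_trunc_gain:
  assumes "causal S" and S_L2ep: "\<And>u. u \<in> L2ep \<Longrightarrow> S u \<in> L2ep" and "0 \<le> K"
    and gain: "\<And>u T. u \<in> L2ep \<Longrightarrow> 0 \<le> T \<Longrightarrow> norm_L2 (trunc T (S u)) \<le> K * norm_L2 (trunc T u)"
  shows "stable S"
proof -
  have "S u \<in> L2p \<and> norm_L2 (S u) \<le> K * norm_L2 u" if u: "u \<in> L2p" for u
  proof -
    have "norm_L2 (trunc T (S u)) \<le> K * norm_L2 u" if "0 \<le> T" for T
      using gain[OF L2p_imp_L2ep[OF u] that] norm_L2_trunc_le[OF L2p_imp_L2[OF u], of T] \<open>0 \<le> K\<close>
      by (meson mult_left_mono order_trans)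
    then show ?thesis
      using L2ep_bounded_imp_L2p[OF S_L2ep[OF L2p_imp_L2ep[OF u]]] by blast
  qed
  then show ?thesis
    using \<open>causal S\<close> norm_L2_nonneg unfolding stable_def
    by (metis divide_le_eq less_eq_real_def)
qed

definition angle_ratios :: "'n::finite system \<Rightarrow> real set" where
  "angle_ratios S = {inner_L2 u (S u) / (norm_L2 u * norm_L2 (S u)) | u.
     u \<in> L2p \<and> norm_L2 u \<noteq> 0 \<and> norm_L2 (S u) \<noteq> 0}"

definition cos_angle_ge :: "real \<Rightarrow> 'n::finite system \<Rightarrow> bool" where
  "cos_angle_ge c S \<longleftrightarrow> (\<forall>u\<in>L2p. c * norm_L2 u * norm_L2 (S u) \<le> inner_L2 u (S u))"

lemma singular_angle_eq_arccos_Inf: "singular_angle S = arccos (Inf (angle_ratios S))"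
  by (simp add: singular_angle_def angle_ratios_def)

lemma abs_angle_ratio_le_1:
  fixes S :: "'n::finite system"
  assumes "\<And>u. u \<in> L2p \<Longrightarrow> S u \<in> L2p" and "x \<in> angle_ratios S"
  shows "\<bar>x\<bar> \<le> 1"
proof -
  obtain u where x: "x = inner_L2 u (S u) / (norm_L2 u * norm_L2 (S u))"
    and u: "u \<in> L2p" "norm_L2 u \<noteq> 0" "norm_L2 (S u) \<noteq> 0"
    using assms(2) unfolding angle_ratios_def by blast
  have pos: "0 < norm_L2 u * norm_L2 (S u)"
    using u norm_L2_nonneg[of u] norm_L2_nonneg[of "S u"] by simp
  have "\<bar>inner_L2 u (S u)\<bar> \<le> norm_L2 u * norm_L2 (S u)"
    using abs_inner_L2_le[OF L2p_imp_L2 L2p_imp_L2, OF u(1) assms(1)[OF u(1)]] .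
  then show ?thesis
    unfolding x abs_divide abs_of_pos[OF pos] by (simp add: divide_le_eq_1_pos[OF pos])
qed

lemma angle_ratios_bounded:
  fixes S :: "'n::finite system"
  assumes "\<And>u. u \<in> L2p \<Longrightarrow> S u \<in> L2p"
  shows "bdd_below (angle_ratios S)"
  using abs_angle_ratio_le_1[of S, OF assms] by (intro bdd_belowI[of _ "-1"]) (auto simp: abs_le_iff)

lemma cos_angle_ge_if_singular_angle_le:
  fixes S :: "'n::finite system"
  assumes S_L2p: "\<And>u. u \<in> L2p \<Longrightarrow> S u \<in> L2p"
    and angle: "singular_angle S \<le> \<alpha>" and "0 \<le> \<alpha>" "\<alpha> \<le> pi"
  shows "cos_angle_ge (cos \<alpha>) S"
  unfolding cos_angle_ge_def
proof
  fix u :: "'n signal"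
  assume u: "u \<in> L2p"
  show "cos \<alpha> * norm_L2 u * norm_L2 (S u) \<le> inner_L2 u (S u)"
  proof (cases "norm_L2 u = 0 \<or> norm_L2 (S u) = 0")
    case True
    then show ?thesis
      using abs_inner_L2_le[OF L2p_imp_L2 L2p_imp_L2, OF u S_L2p[OF u]] by auto
  next
    case False
    define r where "r = inner_L2 u (S u) / (norm_L2 u * norm_L2 (S u))"
    have r: "r \<in> angle_ratios S"
      using u False unfolding angle_ratios_def r_def by blast
    have Inf_le: "Inf (angle_ratios S) \<le> r"
      using r angle_ratios_bounded[of S, OF S_L2p] by (rule cInf_lower)
    have "-1 \<le> Inf (angle_ratios S)"
      using abs_angle_ratio_le_1[of S, OF S_L2p] r by (intro cInf_greatest) (auto simp: abs_le_iff)
    moreover have "Inf (angle_ratios S) \<le> 1"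
      using Inf_le abs_le_D1[OF abs_angle_ratio_le_1[of S, OF S_L2p r]] by linarith
    ultimately have Inf_range: "-1 \<le> Inf (angle_ratios S)" "Inf (angle_ratios S) \<le> 1" .
    have "cos \<alpha> \<le> cos (arccos (Inf (angle_ratios S)))"
      using angle \<open>\<alpha> \<le> pi\<close> arccos_lbound[OF Inf_range]
      by (intro cos_monotone_0_pi_le) (auto simp: singular_angle_eq_arccos_Inf)
    then have "cos \<alpha> \<le> r"
      using Inf_le Inf_range by simp
    moreover have "0 < norm_L2 u * norm_L2 (S u)"
      using False norm_L2_nonneg[of u] norm_L2_nonneg[of "S u"] by simp
    ultimately show ?thesis
      by (simp add: r_def pos_le_divide_eq mult.assoc)
  qed
qed

lemma singular_angle_le_if_cos_angle_ge:
  fixes S :: "'n::finite system"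
  assumes S_L2p: "\<And>u. u \<in> L2p \<Longrightarrow> S u \<in> L2p"
    and nonempty: "angle_ratios S \<noteq> {}" and cos_angle: "cos_angle_ge (cos \<alpha>) S"
    and "0 \<le> \<alpha>" "\<alpha> \<le> pi"
  shows "singular_angle S \<le> \<alpha>"
proof -
  have "cos \<alpha> \<le> x" if x_ratio: "x \<in> angle_ratios S" for x
  proof -
    obtain u where x: "x = inner_L2 u (S u) / (norm_L2 u * norm_L2 (S u))"
      and u: "u \<in> L2p" "norm_L2 u \<noteq> 0" "norm_L2 (S u) \<noteq> 0"
      using x_ratio unfolding angle_ratios_def by blast
    have "0 < norm_L2 u * norm_L2 (S u)"
      using u norm_L2_nonneg[of u] norm_L2_nonneg[of "S u"] by simp
    then show ?thesis
      using cos_angle u(1) unfolding x cos_angle_ge_def by (simp add: pos_le_divide_eq mult.assoc)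
  qed
  then have "cos \<alpha> \<le> Inf (angle_ratios S)"
    using nonempty by (intro cInf_greatest)
  moreover obtain x where x: "x \<in> angle_ratios S"
    using nonempty by blast
  then have "Inf (angle_ratios S) \<le> 1"
    using cInf_lower[OF x angle_ratios_bounded[of S, OF S_L2p]]
      abs_le_D1[OF abs_angle_ratio_le_1[of S, OF S_L2p x]] by linarith
  ultimately have "arccos (Inf (angle_ratios S)) \<le> arccos (cos \<alpha>)"
    by (intro arccos_le_arccos) auto
  then show ?thesis
    using \<open>0 \<le> \<alpha>\<close> \<open>\<alpha> \<le> pi\<close> by (simp add: singular_angle_eq_arccos_Inf arccos_cos)
qed

lemma cos_angle_ge_trunc:
  fixes S :: "'n::finite system"
  assumes S: "stable S" and "0 \<le> c" and cos_angle: "cos_angle_ge c S"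
    and u: "u \<in> L2ep" and T: "0 \<le> T"
  shows "c * norm_L2 (trunc T u) * norm_L2 (trunc T (S u)) \<le> inner_L2 (trunc T u) (trunc T (S u))"
proof -
  define v where "v = trunc T u"
  have v: "v \<in> L2p"
    using L2ep_trunc[OF u T] by (simp add: v_def)
  have "c * norm_L2 v * norm_L2 (trunc T (S v)) \<le> c * norm_L2 v * norm_L2 (S v)"
    using norm_L2_trunc_le[OF L2p_imp_L2[OF stable_L2p[OF S v]]] \<open>0 \<le> c\<close> norm_L2_nonneg[of v]
    by (simp add: mult_left_mono)
  also have "\<dots> \<le> inner_L2 v (S v)"
    using cos_angle v by (simp add: cos_angle_ge_def)
  also have "\<dots> = inner_L2 v (trunc T (S v))"
    unfolding v_def by (rule inner_L2_trunc)
  finally show ?thesis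
    using causalD[OF stable_causal[OF S] u T] by (simp add: v_def)
qed

lemma inner_L2_add_ge_cos:
  assumes "a \<in> L2" "b \<in> L2" "d \<in> L2"
    and "c * norm_L2 a * norm_L2 b \<le> inner_L2 a b" and "c * norm_L2 b * norm_L2 d \<le> inner_L2 b d"
  shows "c * norm_L2 b * (norm_L2 a + norm_L2 d) \<le> inner_L2 (\<lambda>t. a t + d t) b"
proof -
  have "inner_L2 (\<lambda>t. a t + d t) b = inner_L2 a b + inner_L2 b d"
    using inner_L2_add_left[OF assms(1,3,2)] inner_L2_commute[of d b] by simp
  moreover have "c * norm_L2 b * (norm_L2 a + norm_L2 d) =
      c * norm_L2 a * norm_L2 b + c * norm_L2 b * norm_L2 d"
    by (simp add: algebra_simps)
  ultimately show ?thesis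
    using assms(4,5) by linarith
qed

lemma norm_L2_le_gain_div_cos:
  assumes L2: "a \<in> L2" "b \<in> L2" "d \<in> L2" and "0 < c" "0 \<le> K"
    and ab: "c * norm_L2 a * norm_L2 b \<le> inner_L2 a b"
    and bd: "c * norm_L2 b * norm_L2 d \<le> inner_L2 b d"
    and b_le: "norm_L2 b \<le> K * norm_L2 a"
  shows "norm_L2 b \<le> K / c * norm_L2 (\<lambda>t. a t + d t)"
proof (cases "norm_L2 b = 0")
  case True
  then show ?thesis
    using \<open>0 < c\<close> \<open>0 \<le> K\<close> norm_L2_nonneg[of "\<lambda>t. a t + d t"] by simp
next
  case False
  have "c * norm_L2 a * norm_L2 b \<le> c * norm_L2 b * (norm_L2 a + norm_L2 d)"
    using \<open>0 < c\<close> norm_L2_nonneg[of b] norm_L2_nonneg[of d] by (simp add: algebra_simps)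
  also have "\<dots> \<le> inner_L2 (\<lambda>t. a t + d t) b"
    using inner_L2_add_ge_cos[OF L2 ab bd] .
  also have "\<dots> \<le> norm_L2 (\<lambda>t. a t + d t) * norm_L2 b"
    using abs_inner_L2_le[OF L2_add[OF L2(1,3)] L2(2)] by simp
  finally have "c * norm_L2 a \<le> norm_L2 (\<lambda>t. a t + d t)"
    using False norm_L2_nonneg[of b] by (simp add: mult.commute mult.left_commute)
  then have "K * norm_L2 a \<le> K / c * norm_L2 (\<lambda>t. a t + d t)"
    using \<open>0 < c\<close> \<open>0 \<le> K\<close> by (simp add: field_simps mult_left_mono)
  with b_le show ?thesis
    by linarith
qed

definition loop_input :: "'n::finite system \<Rightarrow> 'n system \<Rightarrow> 'n system" where
  "loop_input P C e = fst ((SOME F. causal_inverse_fb P C F) (e, \<lambda>t. 0))"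

lemma closed_loop_e1_y1_eq: "closed_loop_e1_y1 P C e = P (loop_input P C e)"
  by (simp add: closed_loop_e1_y1_def loop_input_def)

lemma well_posed_causal_inverse:
  assumes "well_posed P C"
  shows "causal_inverse_fb P C (SOME F. causal_inverse_fb P C F)"
  using assms unfolding well_posed_def by (rule someI_ex)

lemma loop_input_equation:
  fixes P C :: "'n::finite system"
  assumes "well_posed P C" "e \<in> L2ep"
  shows "loop_input P C e \<in> L2ep" "e = (\<lambda>t. loop_input P C e t + C (P (loop_input P C e)) t)"
proof -
  define F where "F = (SOME F. causal_inverse_fb P C F)"
  have F: "causal_inverse_fb P C F"
    unfolding F_def using assms(1) by (rule well_posed_causal_inverse)
  obtain u y where uy: "F (e, \<lambda>t. 0) = (u, y)"
    by fastforce
  have u: "u \<in> L2ep" and "fb_map P C (u, y) = (e, \<lambda>t. 0)"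
    using F assms(2) zero_L2ep uy unfolding causal_inverse_fb_def by (metis fst_conv snd_conv)+
  then have "y = P u" "e = (\<lambda>t. u t + C y t)"
    by (simp_all add: fb_map_def fun_eq_iff)
  then have "e = (\<lambda>t. u t + C (P u) t)"
    by simp
  moreover have "loop_input P C e = u"
    using uy by (simp add: loop_input_def F_def)
  ultimately show "loop_input P C e \<in> L2ep" "e = (\<lambda>t. loop_input P C e t + C (P (loop_input P C e)) t)"
    using u by simp_all
qed

lemma loop_input_of_solution:
  fixes P C :: "'n::finite system"
  assumes "well_posed P C" "is_system P" "u \<in> L2ep"
  shows "loop_input P C (\<lambda>t. u t + C (P u) t) = u"
proof -
  define F where "F = (SOME F. causal_inverse_fb P C F)"
  have "P u \<in> L2ep"
    using assms(2,3) by (simp add: is_system_def)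
  then have "F (fb_map P C (u, P u)) = (u, P u)"
    using well_posed_causal_inverse[OF assms(1)] assms(3) unfolding causal_inverse_fb_def F_def by blast
  moreover have "fb_map P C (u, P u) = (\<lambda>t. u t + C (P u) t, \<lambda>t. 0)"
    by (simp add: fb_map_def)
  ultimately show ?thesis
    by (simp add: loop_input_def F_def)
qed

lemma loop_input_trunc:
  fixes P C :: "'n::finite system"
  assumes "well_posed P C" "e \<in> L2ep" "0 \<le> T"
  shows "trunc T (loop_input P C e) = trunc T (loop_input P C (trunc T e))"
proof -
  define F where "F = (SOME F. causal_inverse_fb P C F)"
  have "trunc T (fst (F (e, \<lambda>t. 0))) = trunc T (fst (F (trunc T e, trunc T (\<lambda>t. 0))))"
    using well_posed_causal_inverse[OF assms(1)] assms(2,3) zero_L2ep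
    unfolding causal_inverse_fb_def F_def by blast
  moreover have "trunc T (\<lambda>t. 0) = (\<lambda>t. 0 :: real ^ 'n)"
    by (simp add: trunc_def)
  ultimately show ?thesis
    by (simp add: loop_input_def F_def)
qed

lemma causal_closed_loop:
  fixes P C :: "'n::finite system"
  assumes "well_posed P C" "causal P"
  shows "causal (closed_loop_e1_y1 P C)"
  unfolding causal_def closed_loop_e1_y1_eq
proof (intro allI impI ballI)
  fix T :: real and e :: "'n signal"
  assume T: "0 \<le> T" and e: "e \<in> L2ep"
  have "trunc T e \<in> L2ep"
    using L2p_imp_L2ep[OF L2ep_trunc[OF e T]] .
  then have u: "loop_input P C e \<in> L2ep" "loop_input P C (trunc T e) \<in> L2ep"
    using loop_input_equation(1)[OF assms(1)] e by blast+
  have "trunc T (P (loop_input P C e)) = trunc T (P (trunc T (loop_input P C e)))"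
    using causalD[OF assms(2) u(1) T] .
  also have "\<dots> = trunc T (P (trunc T (loop_input P C (trunc T e))))"
    using loop_input_trunc[OF assms(1) e T] by simp
  also have "\<dots> = trunc T (P (loop_input P C (trunc T e)))"
    using causalD[OF assms(2) u(2) T] by simp
  finally show "trunc T (P (loop_input P C e)) = trunc T (P (loop_input P C (trunc T e)))" .
qed

locale sectorial_feedback =
  fixes P C :: "'n::finite system" and c :: real
  assumes well_posed: "well_posed P C"
    and system_P: "is_system P" and system_C: "is_system C"
    and stable_P: "stable P" and stable_C: "stable C"
    and c_pos: "0 < c" and cos_angle_P: "cos_angle_ge c P" and cos_angle_C: "cos_angle_ge c C"
begin

lemma closed_loop_trunc_gain:
  obtains K where "0 \<le> K" and "\<And>e T. e \<in> L2ep \<Longrightarrow> 0 \<le> T \<Longrightarrow>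
    norm_L2 (trunc T (closed_loop_e1_y1 P C e)) \<le> K * norm_L2 (trunc T e)"
proof -
  obtain KP where KP: "0 \<le> KP"
    "\<And>u T. u \<in> L2ep \<Longrightarrow> 0 \<le> T \<Longrightarrow> norm_L2 (trunc T (P u)) \<le> KP * norm_L2 (trunc T u)"
    using stable_trunc_gain[OF stable_P] by blast
  have "norm_L2 (trunc T (closed_loop_e1_y1 P C e)) \<le> KP / c * norm_L2 (trunc T e)"
    if e: "e \<in> L2ep" and T: "0 \<le> T" for e T
  proof -
    define u where "u = loop_input P C e"
    have u: "u \<in> L2ep" and e_eq: "e = (\<lambda>t. u t + C (P u) t)"
      using loop_input_equation[OF well_posed e] by (simp_all add: u_def)
    have Pu: "P u \<in> L2ep" and CPu: "C (P u) \<in> L2ep"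
      using system_P system_C u by (simp_all add: is_system_def)
    define a b d where "a = trunc T u" and "b = trunc T (P u)" and "d = trunc T (C (P u))"
    have L2: "a \<in> L2" "b \<in> L2" "d \<in> L2"
      unfolding a_def b_def d_def using u Pu CPu T by (simp_all add: L2ep_trunc L2p_imp_L2)
    have trunc_e: "trunc T e = (\<lambda>t. a t + d t)"
      unfolding a_def d_def by (subst e_eq) (simp add: trunc_def fun_eq_iff)
    have ab: "c * norm_L2 a * norm_L2 b \<le> inner_L2 a b"
      unfolding a_def b_def using cos_angle_ge_trunc[OF stable_P _ cos_angle_P u T] c_pos by simp
    have bd: "c * norm_L2 b * norm_L2 d \<le> inner_L2 b d"
      unfolding b_def d_def using cos_angle_ge_trunc[OF stable_C _ cos_angle_C Pu T] c_pos by simp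
    have "norm_L2 b \<le> KP * norm_L2 a"
      unfolding a_def b_def using KP(2)[OF u T] .
    then have "norm_L2 b \<le> KP / c * norm_L2 (\<lambda>t. a t + d t)"
      using norm_L2_le_gain_div_cos[OF L2 c_pos KP(1) ab bd] by blast
    then show ?thesis
      unfolding trunc_e b_def by (simp add: closed_loop_e1_y1_eq u_def)
  qed
  then show thesis
    using that[of "KP / c"] KP(1) c_pos by simp
qed

lemma stable_closed_loop: "stable (closed_loop_e1_y1 P C)"
proof -
  obtain K where "0 \<le> K" and gain: "\<And>e T. e \<in> L2ep \<Longrightarrow> 0 \<le> T \<Longrightarrow>
    norm_L2 (trunc T (closed_loop_e1_y1 P C e)) \<le> K * norm_L2 (trunc T e)"
    using closed_loop_trunc_gain by blast
  have "closed_loop_e1_y1 P C e \<in> L2ep" if "e \<in> L2ep" for e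
    using system_P loop_input_equation(1)[OF well_posed that]
    by (simp add: closed_loop_e1_y1_eq is_system_def)
  then show ?thesis
    using stable_if_trunc_gain causal_closed_loop[OF well_posed stable_causal[OF stable_P]]
      \<open>0 \<le> K\<close> gain by blast
qed

lemma cos_angle_ge_closed_loop: "cos_angle_ge c (closed_loop_e1_y1 P C)"
  unfolding cos_angle_ge_def
proof
  fix e :: "'n signal"
  assume e: "e \<in> L2p"
  define u where "u = loop_input P C e"
  have e_eq: "e = (\<lambda>t. u t + C (P u) t)"
    using loop_input_equation(2)[OF well_posed L2p_imp_L2ep[OF e]] by (simp add: u_def)
  have y: "P u \<in> L2p"
    using stable_L2p[OF stable_closed_loop e] by (simp add: closed_loop_e1_y1_eq u_def)
  have Cy: "C (P u) \<in> L2p"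
    using stable_L2p[OF stable_C y] .
  have "u = (\<lambda>t. e t - C (P u) t)"
    by (subst e_eq) simp
  then have u: "u \<in> L2p"
    using L2p_diff[OF e Cy] by simp
  have "c * norm_L2 e * norm_L2 (P u) \<le> c * norm_L2 (P u) * (norm_L2 u + norm_L2 (C (P u)))"
    using norm_L2_triangle[OF L2p_imp_L2 L2p_imp_L2, OF u Cy] c_pos norm_L2_nonneg[of "P u"]
    by (subst e_eq) (simp add: mult.commute mult.left_commute mult_left_mono)
  also have "\<dots> \<le> inner_L2 e (P u)"
    using inner_L2_add_ge_cos[OF L2p_imp_L2 L2p_imp_L2 L2p_imp_L2, OF u y Cy]
      cos_angle_P cos_angle_C u y e_eq by (simp add: cos_angle_ge_def)
  finally show "c * norm_L2 e * norm_L2 (closed_loop_e1_y1 P C e)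
      \<le> inner_L2 e (closed_loop_e1_y1 P C e)"
    by (simp add: closed_loop_e1_y1_eq u_def)
qed

lemma angle_ratios_closed_loop_nonempty:
  assumes "angle_ratios P \<noteq> {}"
  shows "angle_ratios (closed_loop_e1_y1 P C) \<noteq> {}"
proof -
  obtain v where v: "v \<in> L2p" "norm_L2 v \<noteq> 0" "norm_L2 (P v) \<noteq> 0"
    using assms unfolding angle_ratios_def by blast
  have Pv: "P v \<in> L2p" and CPv: "C (P v) \<in> L2p"
    using stable_L2p[OF stable_P v(1)] stable_L2p[OF stable_C] by blast+
  define e where "e = (\<lambda>t. v t + C (P v) t)"
  have e: "e \<in> L2p"
    unfolding e_def using v(1) CPv by (rule L2p_add)
  have G_e: "closed_loop_e1_y1 P C e = P v"
    unfolding e_def closed_loop_e1_y1_eq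
    using loop_input_of_solution[OF well_posed system_P L2p_imp_L2ep[OF v(1)]] by simp
  have "0 < c * norm_L2 (P v) * (norm_L2 v + norm_L2 (C (P v)))"
    using c_pos v(2,3) norm_L2_nonneg[of v] norm_L2_nonneg[of "P v"] norm_L2_nonneg[of "C (P v)"]
    by (simp add: add_pos_nonneg)
  also have "\<dots> \<le> inner_L2 e (P v)"
    unfolding e_def
    using inner_L2_add_ge_cos[OF L2p_imp_L2 L2p_imp_L2 L2p_imp_L2, OF v(1) Pv CPv]
      cos_angle_P cos_angle_C v(1) Pv by (simp add: cos_angle_ge_def)
  finally have "norm_L2 e \<noteq> 0"
    using abs_inner_L2_le[OF L2p_imp_L2 L2p_imp_L2, OF e Pv] by auto
  then show ?thesis
    using e v(3) G_e unfolding angle_ratios_def by auto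
qed

end

theorem proposition6:
  fixes P C :: "'n::finite system" and \<alpha> :: real
  assumes "0 \<le> \<alpha>" "\<alpha> < pi / 2"
    and "is_system P" "is_system C" "stable P" "stable C"
    and "singular_angle P \<le> \<alpha>" "singular_angle C \<le> \<alpha>"
    and "well_posed P C"
  shows "stable (closed_loop_e1_y1 P C) \<and> singular_angle (closed_loop_e1_y1 P C) \<le> \<alpha>"
proof -
  have "\<alpha> \<le> pi"
    using assms(2) pi_gt_zero by linarith
  have cos_angle: "cos_angle_ge (cos \<alpha>) S" if "stable S" "singular_angle S \<le> \<alpha>" for S :: "'n system"
    using cos_angle_ge_if_singular_angle_le[of S] stable_L2p[OF that(1)] that(2) assms(1) \<open>\<alpha> \<le> pi\<close>
    by blast
  have "0 < cos \<alpha>"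
    using assms(1,2) by (intro cos_gt_zero_pi) auto
  then interpret sectorial_feedback P C "cos \<alpha>"
    using assms cos_angle by unfold_locales auto
  have "singular_angle (closed_loop_e1_y1 P C) \<le> \<alpha>"
  proof (cases "angle_ratios (closed_loop_e1_y1 P C) = {}")
    case True
    then have "angle_ratios P = {}"
      using angle_ratios_closed_loop_nonempty by blast
    \<comment> \<open>both angles are the junk value \<open>arccos (Inf {})\<close>\<close>
    with True have "singular_angle (closed_loop_e1_y1 P C) = singular_angle P"
      by (simp add: singular_angle_eq_arccos_Inf)
    then show ?thesis
      using assms(7) by simp
  next
    case False
    then show ?thesis
      using singular_angle_le_if_cos_angle_ge stable_L2p[OF stable_closed_loop]
        cos_angle_ge_closed_loop assms(1) \<open>\<alpha> \<le> pi\<close> by blast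
  qed
  then show ?thesis
    using stable_closed_loop by blast
qed

end
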